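(* Let $n\ge r\ge1$, let $\mathcal{O}\subset\mathbb{R}^{n\times r}$ be open with ${\rm St}(n,r)\subset\mathcal{O}$, let $f:\mathcal{O}\to\mathbb{R}$ be continuously differentiable, and consider (P): $\min_{X\in\mathcal{S}_{+}^{n,r}}f(X)$. Suppose that every global (respectively, local) minimizer of (P) has no zero rows when $n>r>1$, and that for every global (respectively, local) minimizer $X^*$ of (P) there exist $\delta'>0$ and $L'>0$ such that for all $X\in{\rm St}(n,r)$ with $\|X-X^*\|_F\le\delta'$ and all $\overline{X}\in{\rm Proj}_{\mathcal{S}_{+}^{n,r}}(X)$, $f(X)-f(\overline{X})\ge-L'\|X-\overline{X}\|_F^2$. Then for every global (respectively, local) minimizer $X^*$ of (P): 1. if $n=r$ or $n>r=1$, with $\kappa'>0$ a constant such that ${\rm dist}(Z,\mathcal{S}_{+}^{n,r})\le\kappa'{\rm dist}(Z,\mathbb{R}_{+}^{n\times r})$ for all $Z\in{\rm St}(n,r)$, there exists $\delta>0$ such that for all $X\in{\rm St}(n,r)$ with $\|X-X^*\|_F\le\delta$, $f(X)-f(X^* )+(\kappa')^2L'\|\max(0,-X)\|_F^2\ge0$; 2. if $n>r>1$, with $\kappa:=\frac{2.1\sqrt{r}[1+3r(n-r)]}{X^*_{i^*j^*}}$ ($X^*_{i^*j^*}$ the smallest nonzero entry of $X^*$), there exists $\delta>0$ such that for all $\epsilon\ge0$ and all $X\in\mathcal{G}_\epsilon:=\{X\in{\rm St}(n,r):\|\max(0,-X)\|_F^2=\epsilon\}$ with $\|X-X^*\|_F\le\delta$,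 $f(X)-f(X^* )+\kappa^2L'\|\max(0,-X)\|_F^2\ge0$. Consequently, there exists $\widehat{\rho}>0$ such that for every $\rho\ge\widehat{\rho}$ the problem $\min_{X\in{\rm St}(n,r)}\{f(X)+\rho\|\max(0,-X)\|_F^2\}$ has the same set of global optimal solutions as (P).
   Context: ${\rm St}(n,r):=\{X\in\mathbb{R}^{n\times r}: X^\top X=I_r\}$, $\mathbb{R}_{+}^{n\times r}$ the entrywise nonnegative matrices, $\mathcal{S}_{+}^{n,r}:=\mathbb{R}_{+}^{n\times r}\cap{\rm St}(n,r)$, ${\rm dist}$ the Frobenius-norm distance, ${\rm Proj}_\Omega(X)$ the set of nearest points of $\Omega$ to $X$; $\max(0,-X)$ is taken entrywise. *)

theory Defs
  imports "HOL-Analysis.Analysis"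
begin

text \<open>Matrices in R^(n x r) are modelled as real^'r^'n (rows indexed by 'n, columns by 'r);
  n = CARD('n), r = CARD('r). The norm/dist on this type is the Frobenius norm/distance.\<close>

definition Stiefel :: "(real^'r^'n) set" where
  "Stiefel = {X. transpose X ** X = mat 1}"

definition Nonneg :: "(real^'r^'n) set" where
  "Nonneg = {X. \<forall>i j. 0 \<le> X $ i $ j}"

definition Splus :: "(real^'r^'n) set" where
  "Splus = Nonneg \<inter> Stiefel"

definition negpart :: "real^'r^'n \<Rightarrow> real^'r^'n" where
  "negpart X = (\<chi> i j. max 0 (- (X $ i $ j)))"

definition Proj :: "'a::metric_space set \<Rightarrow> 'a \<Rightarrow> 'a set" where
  "Proj \<Omega> X = {Y \<in> \<Omega>. \<forall>Z \<in> \<Omega>. dist X Y \<le> dist X Z}"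

definition argmin_on :: "'a set \<Rightarrow> ('a \<Rightarrow> real) \<Rightarrow> 'a set" where
  "argmin_on S g = {X \<in> S. \<forall>Y \<in> S. g X \<le> g Y}"

definition global_min_P :: "(real^'r^'n \<Rightarrow> real) \<Rightarrow> real^'r^'n \<Rightarrow> bool" where
  "global_min_P f X \<longleftrightarrow> X \<in> Splus \<and> (\<forall>Y \<in> Splus. f X \<le> f Y)"

definition local_min_P :: "(real^'r^'n \<Rightarrow> real) \<Rightarrow> real^'r^'n \<Rightarrow> bool" where
  "local_min_P f X \<longleftrightarrow> X \<in> Splus \<and>
     (\<exists>e>0. \<forall>Y \<in> Splus. dist Y X < e \<longrightarrow> f X \<le> f Y)"

definition has_zero_row :: "real^'r^'n \<Rightarrow> bool" where
  "has_zero_row X \<longleftrightarrow> (\<exists>i. \<forall>j. X $ i $ j = 0)"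

definition min_nonzero_entry :: "real^'r^'n \<Rightarrow> real" where
  "min_nonzero_entry X = Min {X $ i $ j | i j. X $ i $ j \<noteq> 0}"

definition proj_cond :: "(real^'r^'n \<Rightarrow> real) \<Rightarrow> real^'r^'n \<Rightarrow> real \<Rightarrow> real \<Rightarrow> bool" where
  "proj_cond f Xs \<delta>' L' \<longleftrightarrow>
     (\<forall>X \<in> Stiefel. dist X Xs \<le> \<delta>' \<longrightarrow>
        (\<forall>Xb \<in> Proj Splus X. f X - f Xb \<ge> - L' * (dist X Xb)\<^sup>2))"

definition conclusions :: "(real^'r^'n \<Rightarrow> real) \<Rightarrow> real^'r^'n \<Rightarrow> real \<Rightarrow> bool" where
  "conclusions f Xs L' \<longleftrightarrow>
     ((CARD('n) = CARD('r) \<or> (CARD('n) > CARD('r) \<and> CARD('r) = 1)) \<longrightarrow>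
        (\<forall>\<kappa>'>0. (\<forall>Z \<in> (Stiefel :: (real^'r^'n) set).
                     infdist Z Splus \<le> \<kappa>' * infdist Z Nonneg) \<longrightarrow>
          (\<exists>\<delta>>0. \<forall>X \<in> Stiefel. dist X Xs \<le> \<delta> \<longrightarrow>
             f X - f Xs + \<kappa>'\<^sup>2 * L' * (norm (negpart X))\<^sup>2 \<ge> 0)))
   \<and> ((CARD('n) > CARD('r) \<and> CARD('r) > 1) \<longrightarrow>
        (let n = real CARD('n); r = real CARD('r);
             \<kappa> = (21/10) * sqrt r * (1 + 3 * r * (n - r)) / min_nonzero_entry Xs
         in \<exists>\<delta>>0. \<forall>\<epsilon>\<ge>0. \<forall>X.
              X \<in> Stiefel \<and> (norm (negpart X))\<^sup>2 = \<epsilon> \<and> dist X Xs \<le> \<delta> \<longrightarrow>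
              f X - f Xs + \<kappa>\<^sup>2 * L' * (norm (negpart X))\<^sup>2 \<ge> 0))"

end

theory Submission
  imports Defs
begin

(* Everything rests on a local error bound dist(X, S+) <= c ||max(0,-X)|| for X in St(n,r)
   near a minimizer Xs. It turns the projection condition into the penalty inequality: for a
   nearest point Xb of S+ to X, f(X) - f(Xb) >= -L' dist(X,Xb)^2 >= -c^2 L' ||max(0,-X)||^2,
   and f(Xb) >= f(Xs) because Xb is close to Xs.

   If Xs has no zero row, each row of Xs has exactly one nonzero entry, since its columns are
   nonnegative and orthogonal. Split X near Xs into its entries on this pattern and the rest E.
   The pattern part has orthogonal columns, and normalising them gives a point of S+ within
   ||E|| + ||E||^2 of X. The cross terms X_ij X_ik (j ~= k) within the rows of X sum to zero,
   because 1^T X^T X 1 = r = ||X||^2; as the pattern entries of X stay close to those of Xs,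
   this bounds the positive entries of E by the negative entries of X, so that
   ||E|| <= const ||max(0,-X)||. For r = 1 one normalises the positive part of X instead, and
   for n = r no matrix of S+ has a zero row.

   For the exact penalty: if no penalty parameter worked, points violating ever larger
   parameters would accumulate at a global minimizer of (P), where the penalty inequality
   rules them out. *)

section \<open>Frobenius norm, the Stiefel manifold and its nonnegative part\<close>

lemma power2_norm_matrix: "(norm (X::real^'r^'n))\<^sup>2 = (\<Sum>i\<in>UNIV. \<Sum>j\<in>UNIV. (X$i$j)\<^sup>2)"
  unfolding power2_norm_eq_inner by (simp add: inner_vec_def power2_eq_square)

lemma norm_matrix_le_sum_abs: "norm (X::real^'r^'n) \<le> (\<Sum>i\<in>UNIV. \<Sum>j\<in>UNIV. \<bar>X$i$j\<bar>)"
proof -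
  have "norm X \<le> (\<Sum>i\<in>UNIV. norm (X$i))"
    unfolding norm_vec_def by (rule L2_set_le_sum) simp
  also have "\<dots> \<le> (\<Sum>i\<in>UNIV. \<Sum>j\<in>UNIV. \<bar>X$i$j\<bar>)"
    by (intro sum_mono norm_le_l1_cart)
  finally show ?thesis .
qed

lemma sum_abs_matrix_le_norm:
  "(\<Sum>i\<in>UNIV. \<Sum>j\<in>UNIV. \<bar>(X::real^'r^'n)$i$j\<bar>) \<le> sqrt (real CARD('n) * real CARD('r)) * norm X"
proof -
  have "(\<Sum>p\<in>UNIV. \<bar>X$fst p$snd p\<bar>)\<^sup>2 \<le> (\<Sum>p\<in>UNIV. (X$fst p$snd p)\<^sup>2) * card (UNIV :: ('n \<times> 'r) set)"
    using sum_squared_le_sum_of_squares[of "\<lambda>p. \<bar>X$fst p$snd p\<bar>" UNIV] by simp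
  then have "(\<Sum>i\<in>UNIV. \<Sum>j\<in>UNIV. \<bar>X$i$j\<bar>)\<^sup>2 \<le> (norm X)\<^sup>2 * (real CARD('n) * real CARD('r))"
    using card_cartesian_product[of "UNIV::'n set" "UNIV::'r set"]
    by (simp add: power2_norm_matrix sum.cartesian_product split_beta)
  then have "(\<Sum>i\<in>UNIV. \<Sum>j\<in>UNIV. \<bar>X$i$j\<bar>) \<le> sqrt ((norm X)\<^sup>2 * (real CARD('n) * real CARD('r)))"
    by (rule real_le_rsqrt)
  then show ?thesis by (simp add: real_sqrt_mult mult.commute)
qed

lemma abs_matrix_entry_le_norm: "\<bar>(X::real^'r^'n)$i$j\<bar> \<le> norm X"
  by (rule order_trans[OF component_le_norm_cart Finite_Cartesian_Product.norm_nth_le])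

lemma mem_Stiefel_iff: "(X::real^'r^'n) \<in> Stiefel \<longleftrightarrow>
   (\<forall>j k. (\<Sum>i\<in>UNIV. X$i$j * X$i$k) = (if j = k then 1 else 0))"
  by (simp add: Stiefel_def vec_eq_iff matrix_matrix_mult_def transpose_def mat_def)

lemma Stiefel_column_norm: "(X::real^'r^'n) \<in> Stiefel \<Longrightarrow> (\<Sum>i\<in>UNIV. (X$i$j)\<^sup>2) = 1"
  unfolding mem_Stiefel_iff power2_eq_square by presburger

lemma power2_norm_Stiefel: "(X::real^'r^'n) \<in> Stiefel \<Longrightarrow> (norm X)\<^sup>2 = real CARD('r)"
  unfolding power2_norm_matrix by (subst sum.swap) (simp add: Stiefel_column_norm)

lemma Stiefel_abs_entry_le_1: "(X::real^'r^'n) \<in> Stiefel \<Longrightarrow> \<bar>X$i$j\<bar> \<le> 1"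
proof -
  assume "X \<in> Stiefel"
  then have "(X$i$j)\<^sup>2 \<le> 1"
    using member_le_sum[of i UNIV "\<lambda>l. (X$l$j)\<^sup>2"] Stiefel_column_norm by fastforce
  then show ?thesis by (simp add: abs_square_le_1)
qed

lemma Stiefel_sum_row_sums_squared:
  assumes "(X::real^'r^'n) \<in> Stiefel"
  shows "(\<Sum>i\<in>UNIV. (\<Sum>j\<in>UNIV. X$i$j)\<^sup>2) = (\<Sum>i\<in>UNIV. \<Sum>j\<in>UNIV. (X$i$j)\<^sup>2)"
proof -
  have "(\<Sum>i\<in>UNIV. (\<Sum>j\<in>UNIV. X$i$j)\<^sup>2) = (\<Sum>i\<in>UNIV. \<Sum>j\<in>UNIV. \<Sum>k\<in>UNIV. X$i$j * X$i$k)"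
    by (simp add: power2_eq_square sum_product)
  also have "\<dots> = (\<Sum>j\<in>UNIV. \<Sum>i\<in>UNIV. \<Sum>k\<in>UNIV. X$i$j * X$i$k)"
    by (rule sum.swap)
  also have "\<dots> = (\<Sum>j\<in>UNIV. \<Sum>k\<in>UNIV. \<Sum>i\<in>UNIV. X$i$j * X$i$k)"
    by (intro sum.cong refl) (rule sum.swap)
  also have "\<dots> = real CARD('r)"
    using assms by (simp add: mem_Stiefel_iff)
  also have "\<dots> = (\<Sum>i\<in>UNIV. \<Sum>j\<in>UNIV. (X$i$j)\<^sup>2)"
    using power2_norm_Stiefel[OF assms] by (simp add: power2_norm_matrix)
  finally show ?thesis .
qed

lemma closed_Stiefel: "closed (Stiefel :: (real^'r^'n) set)"
proof -
  have eq: "(Stiefel::(real^'r^'n) set) =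
      (\<Inter>j. \<Inter>k. {X. (\<Sum>i\<in>UNIV. X$i$j * X$i$k) = (if j = k then 1 else 0)})"
    by (auto simp: mem_Stiefel_iff)
  have "closed {X::real^'r^'n. (\<Sum>i\<in>UNIV. X$i$j * X$i$k) = c}" for j k c
    by (intro closed_Collect_eq continuous_intros continuous_on_component)
  then show ?thesis unfolding eq by (intro closed_INT ballI)
qed

lemma compact_Stiefel: "compact (Stiefel :: (real^'r^'n) set)"
proof -
  have "bounded (Stiefel :: (real^'r^'n) set)"
    unfolding bounded_iff using power2_norm_Stiefel real_le_rsqrt by (metis order_refl)
  then show ?thesis using closed_Stiefel by (simp add: compact_eq_bounded_closed)
qed

lemma closed_Nonneg: "closed (Nonneg :: (real^'r^'n) set)"
proof -
  have eq: "(Nonneg::(real^'r^'n) set) = (\<Inter>i. \<Inter>j. {X. 0 \<le> X$i$j})"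
    by (auto simp: Nonneg_def)
  have "closed {X::real^'r^'n. 0 \<le> X$i$j}" for i j
    by (intro closed_Collect_le continuous_intros continuous_on_component)
  then show ?thesis unfolding eq by (intro closed_INT ballI)
qed

lemma compact_Splus: "compact (Splus :: (real^'r^'n) set)"
proof -
  have "(Splus::(real^'r^'n) set) = Stiefel \<inter> Nonneg" by (auto simp: Splus_def)
  then show ?thesis using compact_Stiefel closed_Nonneg by (metis compact_Int_closed)
qed

lemma Splus_nonempty:
  assumes "CARD('r) \<le> CARD('n)"
  shows "(Splus :: (real^'r^'n) set) \<noteq> {}"
proof -
  obtain g :: "'r \<Rightarrow> 'n" where g: "inj g"
    using card_le_inj[of "UNIV::'r set" "UNIV::'n set"] assms by auto
  define Z :: "real^'r^'n" where "Z = (\<chi> i j. if i = g j then 1 else 0)"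
  have "(\<Sum>i\<in>UNIV. Z$i$j * Z$i$k) = (if j = k then 1 else 0)" for j k
  proof -
    have "(\<Sum>i\<in>UNIV. Z$i$j * Z$i$k) = (\<Sum>i\<in>UNIV. if i = g j then (if g j = g k then 1 else 0) else 0)"
      by (intro sum.cong) (auto simp: Z_def)
    then show ?thesis by (simp add: inj_eq[OF g])
  qed
  then have "Z \<in> Stiefel" by (simp add: mem_Stiefel_iff)
  moreover have "Z \<in> Nonneg" by (auto simp: Nonneg_def Z_def)
  ultimately show ?thesis by (auto simp: Splus_def)
qed

lemma power2_norm_negpart:
  "(norm (negpart (X::real^'r^'n)))\<^sup>2 = (\<Sum>i\<in>UNIV. \<Sum>j\<in>UNIV. (max 0 (- X$i$j))\<^sup>2)"
  by (simp add: power2_norm_matrix negpart_def)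

lemma negpart_eq_0_iff: "negpart (X::real^'r^'n) = 0 \<longleftrightarrow> X \<in> Nonneg"
proof -
  have "max 0 (- x) = 0 \<longleftrightarrow> 0 \<le> x" for x :: real by (simp add: max_def)
  then show ?thesis by (simp add: negpart_def Nonneg_def vec_eq_iff)
qed

lemma norm_negpart_le: "norm (negpart (X::real^'r^'n)) \<le> norm X"
proof -
  have "(max 0 (- x))\<^sup>2 \<le> x\<^sup>2" for x :: real
    by (cases "0 \<le> x") (auto simp: max_def)
  then have "(norm (negpart X))\<^sup>2 \<le> (norm X)\<^sup>2"
    unfolding power2_norm_negpart power2_norm_matrix[of X] by (intro sum_mono)
  then show ?thesis by (simp add: power2_le_iff_abs_le)
qed

lemma Splus_eq_negpart_zero:
  "(Splus :: (real^'r^'n) set) = {X \<in> Stiefel. (norm (negpart X))\<^sup>2 = 0}"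
  by (auto simp: Splus_def negpart_eq_0_iff)

lemma continuous_on_norm_negpart: "continuous_on S (\<lambda>X::real^'r^'n. norm (negpart X))"
  unfolding negpart_def by (intro continuous_intros continuous_on_component)

lemma infdist_Nonneg_le_norm_negpart: "infdist (X::real^'r^'n) Nonneg \<le> norm (negpart X)"
proof -
  have "X + negpart X \<in> Nonneg" by (auto simp: Nonneg_def negpart_def)
  then have "infdist X Nonneg \<le> dist X (X + negpart X)" by (rule infdist_le)
  then show ?thesis by (simp add: dist_norm)
qed

lemma Proj_nonempty:
  fixes S :: "'a::heine_borel set"
  assumes "closed S" "S \<noteq> {}"
  shows "Proj S X \<noteq> {}"
proof -
  obtain Y where "Y \<in> S" "\<And>Z. Z \<in> S \<Longrightarrow> dist X Y \<le> dist X Z"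
    using distance_attains_inf[OF assms] by blast
  then show ?thesis by (auto simp: Proj_def)
qed

lemma dist_Proj_eq_infdist:
  assumes "Y \<in> Proj S X"
  shows "dist X Y = infdist X S"
proof (rule antisym)
  have Y: "Y \<in> S" and min: "\<And>Z. Z \<in> S \<Longrightarrow> dist X Y \<le> dist X Z"
    using assms by (auto simp: Proj_def)
  have "S \<noteq> {}" using Y by auto
  then show "dist X Y \<le> infdist X S"
    unfolding infdist_notempty[OF \<open>S \<noteq> {}\<close>] using min by (intro cINF_greatest) auto
  show "infdist X S \<le> dist X Y" using Y by (rule infdist_le)
qed

section \<open>Local error bound\<close>

lemma infdist_Splus_le_sum_column_defects:
  fixes Y :: "real^'r^'n" and t :: "'r \<Rightarrow> real"
  assumes Y: "Y \<in> Nonneg"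
    and orth: "\<And>j k. j \<noteq> k \<Longrightarrow> (\<Sum>i\<in>UNIV. Y$i$j * Y$i$k) = 0"
    and col: "\<And>j. (\<Sum>i\<in>UNIV. (Y$i$j)\<^sup>2) = 1 - t j"
    and t: "\<And>j. 0 \<le> t j" "\<And>j. t j < 1"
  shows "infdist Y Splus \<le> (\<Sum>j\<in>UNIV. t j)"
proof -
  define s where "s j = sqrt (1 - t j)" for j
  have s_pos: "0 < s j" and s_sq: "(s j)\<^sup>2 = 1 - t j" and s_le: "s j \<le> 1" for j
    using t[of j] by (auto simp: s_def)
  define Z :: "real^'r^'n" where "Z = (\<chi> i j. Y$i$j / s j)"
  have "(\<Sum>i\<in>UNIV. Z$i$j * Z$i$k) = (if j = k then 1 else 0)" for j k
  proof (cases "j = k")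
    case True
    then show ?thesis
      using col[of j] s_sq[of j] t(2)[of j]
      by (simp add: Z_def power2_eq_square sum_divide_distrib[symmetric])
  next
    case False
    then show ?thesis using orth[OF False] by (simp add: Z_def sum_divide_distrib[symmetric])
  qed
  moreover have "Z \<in> Nonneg" using Y s_pos by (auto simp: Nonneg_def Z_def less_imp_le)
  ultimately have ZS: "Z \<in> Splus" by (simp add: Splus_def mem_Stiefel_iff)
  have "dist Y Z = L2_set (\<lambda>j. 1 - s j) UNIV"
  proof -
    have "(dist Y Z)\<^sup>2 = (\<Sum>i\<in>UNIV. \<Sum>j\<in>UNIV. (Y$i$j - Y$i$j / s j)\<^sup>2)"
      by (simp add: dist_norm power2_norm_matrix Z_def)
    also have "\<dots> = (\<Sum>j\<in>UNIV. \<Sum>i\<in>UNIV. (Y$i$j)\<^sup>2 * (1 - 1 / s j)\<^sup>2)"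
      by (subst sum.swap) (simp add: power2_eq_square algebra_simps)
    also have "\<dots> = (\<Sum>j\<in>UNIV. (s j)\<^sup>2 * (1 - 1 / s j)\<^sup>2)"
      by (simp add: sum_distrib_right[symmetric] col s_sq)
    also have "\<dots> = (\<Sum>j\<in>UNIV. (1 - s j)\<^sup>2)"
    proof -
      have "(s j)\<^sup>2 * (1 - 1 / s j)\<^sup>2 = (1 - s j)\<^sup>2" for j
        using s_pos[of j] by (simp add: power2_eq_square field_simps)
      then show ?thesis by simp
    qed
    finally show ?thesis by (simp add: L2_set_def real_sqrt_unique)
  qed
  also have "\<dots> \<le> L2_set t UNIV"
  proof (rule L2_set_mono)
    fix j
    have "(s j)\<^sup>2 \<le> s j" using s_pos[of j] s_le[of j] by (simp add: power2_eq_square mult_le_cancel_left1)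
    then show "1 - s j \<le> t j" using s_sq[of j] by linarith
    show "0 \<le> 1 - s j" using s_le[of j] by simp
  qed
  also have "\<dots> \<le> (\<Sum>j\<in>UNIV. t j)" by (rule L2_set_le_sum) (simp add: t)
  finally show ?thesis using infdist_le[OF ZS, of Y] by linarith
qed

lemma Splus_row_nonzero_unique:
  fixes Xs :: "real^'r^'n"
  assumes Xs: "Xs \<in> Splus" and "Xs$i$j \<noteq> 0" "Xs$i$k \<noteq> 0"
  shows "j = k"
proof (rule ccontr)
  assume "j \<noteq> k"
  have nonneg: "0 \<le> Xs$l$c" for l c using Xs by (auto simp: Splus_def Nonneg_def)
  have "(\<Sum>l\<in>UNIV. Xs$l$j * Xs$l$k) = 0" using Xs \<open>j \<noteq> k\<close> by (auto simp: Splus_def mem_Stiefel_iff)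
  moreover have "Xs$i$j * Xs$i$k \<le> (\<Sum>l\<in>UNIV. Xs$l$j * Xs$l$k)"
    by (rule member_le_sum) (auto simp: nonneg)
  moreover have "0 < Xs$i$j * Xs$i$k"
    using nonneg[of i j] nonneg[of i k] assms(2,3) by (simp add: less_le)
  ultimately show False by linarith
qed

lemma Splus_square_no_zero_row:
  fixes Xs :: "real^'r^'n"
  assumes Xs: "Xs \<in> Splus" and square: "CARD('n) = CARD('r)"
  shows "\<not> has_zero_row Xs"
proof -
  have "\<exists>i. Xs$i$j \<noteq> 0" for j
  proof (rule ccontr)
    assume "\<nexists>i. Xs$i$j \<noteq> 0"
    then have "(\<Sum>i\<in>UNIV. (Xs$i$j)\<^sup>2) = 0" by simp
    then show False using Stiefel_column_norm[of Xs j] Xs by (simp add: Splus_def)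
  qed
  then obtain g where g: "\<And>j. Xs$(g j)$j \<noteq> 0" by metis
  have "inj g"
    using Splus_row_nonzero_unique[OF Xs g] g by (intro injI) simp
  then have "range g = UNIV"
    using square by (intro card_subset_eq) (auto simp: card_image)
  then show ?thesis unfolding has_zero_row_def using g by (metis rangeE UNIV_I)
qed

lemma finite_nonzero_entries: "finite {(X::real^'r^'n)$i$j | i j. X$i$j \<noteq> 0}"
proof -
  have "finite {X$i$j | i j. i \<in> UNIV \<and> j \<in> UNIV}" by (rule finite_image_set2) simp_all
  then show ?thesis by (rule rev_finite_subset) blast
qed

lemma min_nonzero_entry_le:
  assumes "Xs$i$j \<noteq> 0"
  shows "min_nonzero_entry Xs \<le> Xs$i$j"
proof -
  have "finite {Xs$i$j | i j. Xs$i$j \<noteq> 0}"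
    using finite_nonzero_entries by blast
  then show ?thesis unfolding min_nonzero_entry_def using assms by (intro Min_le) auto
qed

lemma min_nonzero_entry_Splus_bounds:
  fixes Xs :: "real^'r^'n"
  assumes Xs: "Xs \<in> Splus" and "\<not> has_zero_row Xs"
  shows "0 < min_nonzero_entry Xs" "min_nonzero_entry Xs \<le> 1"
proof -
  obtain j where j: "Xs$(undefined::'n)$j \<noteq> 0" using assms(2) by (auto simp: has_zero_row_def)
  then have "{Xs$i$j | i j. Xs$i$j \<noteq> 0} \<noteq> {}" by blast
  then have "min_nonzero_entry Xs \<in> {Xs$i$j | i j. Xs$i$j \<noteq> 0}"
    unfolding min_nonzero_entry_def by (intro Min_in finite_nonzero_entries)
  then obtain i k where ik: "min_nonzero_entry Xs = Xs$i$k" "Xs$i$k \<noteq> 0" by blast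
  have "0 \<le> Xs$i$k" using Xs by (simp add: Splus_def Nonneg_def)
  then show "0 < min_nonzero_entry Xs" using ik by simp
  have "Xs$undefined$j \<le> 1"
    using Xs Stiefel_abs_entry_le_1[of Xs] by (simp add: Splus_def abs_le_iff)
  then show "min_nonzero_entry Xs \<le> 1" using min_nonzero_entry_le[OF j] by simp
qed

text \<open>A pattern \<sigma> selects one column in every row: the support of a matrix of S+ without
  zero rows has this shape.\<close>

definition on_pattern :: "('n \<Rightarrow> 'r) \<Rightarrow> real^'r^'n \<Rightarrow> real^'r^'n" where
  "on_pattern \<sigma> X = (\<chi> i j. if j = \<sigma> i then X$i$j else 0)"

definition off_pattern :: "('n \<Rightarrow> 'r) \<Rightarrow> real^'r^'n \<Rightarrow> real^'r^'n" where
  "off_pattern \<sigma> X = (\<chi> i j. if j = \<sigma> i then 0 else X$i$j)"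

lemma off_pattern_diff: "off_pattern \<sigma> (X - Y) = off_pattern \<sigma> X - off_pattern \<sigma> Y"
  by (simp add: off_pattern_def vec_eq_iff)

lemma norm_off_pattern_le: "norm (off_pattern \<sigma> X) \<le> norm X"
proof -
  have "(norm (off_pattern \<sigma> X))\<^sup>2 \<le> (norm X)\<^sup>2"
    unfolding power2_norm_matrix by (intro sum_mono) (simp add: off_pattern_def)
  then show ?thesis by (simp add: power2_le_iff_abs_le)
qed

lemma Splus_row_pattern:
  fixes Xs :: "real^'r^'n"
  assumes Xs: "Xs \<in> Splus" and "\<not> has_zero_row Xs"
  obtains \<sigma> where "\<And>i. Xs$i$(\<sigma> i) \<noteq> 0" "off_pattern \<sigma> Xs = 0"
proof -
  define \<sigma> where "\<sigma> i = (SOME j. Xs$i$j \<noteq> 0)" for i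
  have nz: "Xs$i$(\<sigma> i) \<noteq> 0" for i
  proof -
    have "\<exists>j. Xs$i$j \<noteq> 0" using assms(2) by (auto simp: has_zero_row_def)
    then show ?thesis unfolding \<sigma>_def by (rule someI_ex)
  qed
  moreover have "Xs$i$j = 0" if "j \<noteq> \<sigma> i" for i j
    using Splus_row_nonzero_unique[OF Xs _ nz[of i], of j] that by blast
  then have "off_pattern \<sigma> Xs = 0" by (simp add: off_pattern_def vec_eq_iff)
  ultimately show ?thesis using that by blast
qed

lemma infdist_Splus_le_off_pattern:
  fixes X :: "real^'r^'n"
  assumes X: "X \<in> Stiefel" and diag: "\<And>i. 0 \<le> X$i$(\<sigma> i)"
    and small: "norm (off_pattern \<sigma> X) < 1"
  shows "infdist X Splus \<le> norm (off_pattern \<sigma> X) + (norm (off_pattern \<sigma> X))\<^sup>2"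
proof -
  define E where "E = off_pattern \<sigma> X"
  define Y where "Y = on_pattern \<sigma> X"
  define t where "t j = (\<Sum>i\<in>UNIV. (E$i$j)\<^sup>2)" for j
  have sum_t: "(\<Sum>j\<in>UNIV. t j) = (norm E)\<^sup>2"
    unfolding t_def power2_norm_matrix by (rule sum.swap)
  have t_nonneg: "0 \<le> t j" for j by (simp add: t_def sum_nonneg)
  have t_lt_1: "t j < 1" for j
  proof -
    have "t j \<le> (\<Sum>j\<in>UNIV. t j)" by (rule member_le_sum) (auto simp: t_nonneg)
    also have "\<dots> < 1" using small sum_t by (simp add: E_def power_less_one_iff abs_square_less_1)
    finally show ?thesis .
  qed
  have "Y \<in> Nonneg" using diag by (simp add: Y_def on_pattern_def Nonneg_def)
  moreover have "(\<Sum>i\<in>UNIV. Y$i$j * Y$i$k) = 0" if "j \<noteq> k" for j k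
    using that by (intro sum.neutral) (auto simp: Y_def on_pattern_def)
  moreover have "(\<Sum>i\<in>UNIV. (Y$i$j)\<^sup>2) = 1 - t j" for j
  proof -
    have "(\<Sum>i\<in>UNIV. (Y$i$j)\<^sup>2) + t j = (\<Sum>i\<in>UNIV. (X$i$j)\<^sup>2)"
      unfolding t_def sum.distrib[symmetric]
      by (intro sum.cong) (auto simp: Y_def E_def on_pattern_def off_pattern_def)
    then show ?thesis using Stiefel_column_norm[OF X] by simp
  qed
  ultimately have "infdist Y Splus \<le> (norm E)\<^sup>2"
    using infdist_Splus_le_sum_column_defects[of Y t] t_nonneg t_lt_1 sum_t by simp
  moreover have "X - Y = E" by (simp add: E_def Y_def on_pattern_def off_pattern_def vec_eq_iff)
  then have "dist X Y = norm E" by (simp add: dist_norm)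
  ultimately show ?thesis
    using infdist_triangle[of X Splus Y] by (simp add: E_def)
qed

lemma row_cross_terms_lower_bound:
  fixes v :: "'a \<Rightarrow> real" and a x :: real
  assumes "a \<le> x" "x \<le> 1"
  shows "2 * a * (\<Sum>j\<in>J. max 0 (v j)) - 2 * (\<Sum>j\<in>J. max 0 (- v j)) - (\<Sum>j\<in>J. (v j)\<^sup>2)
    \<le> (x + sum v J)\<^sup>2 - (x\<^sup>2 + (\<Sum>j\<in>J. (v j)\<^sup>2))"
proof -
  define P N S where "P = (\<Sum>j\<in>J. max 0 (v j))" and "N = (\<Sum>j\<in>J. max 0 (- v j))"
    and "S = (\<Sum>j\<in>J. (v j)\<^sup>2)"
  have sum_v: "sum v J = P - N"
    unfolding P_def N_def sum_subtractf[symmetric] by (intro sum.cong) auto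
  have "(x + sum v J)\<^sup>2 - (x\<^sup>2 + S) = 2 * (x * P) - 2 * (x * N) + (P - N)\<^sup>2 - S"
    unfolding sum_v by (simp add: power2_eq_square algebra_simps)
  moreover have "0 \<le> P" "0 \<le> N" by (simp_all add: P_def N_def sum_nonneg)
  then have "a * P \<le> x * P" "x * N \<le> N"
    using assms mult_right_mono[of x 1 N] by (simp_all add: mult_right_mono)
  ultimately show ?thesis
    unfolding P_def[symmetric] N_def[symmetric] S_def[symmetric]
    using zero_le_power2[of "P - N"] by linarith
qed

lemma Stiefel_off_pattern_cross_bound:
  fixes X :: "real^'r^'n"
  assumes X: "X \<in> Stiefel" and diag: "\<And>i. a \<le> X$i$(\<sigma> i)"
  shows "2 * a * (\<Sum>i\<in>UNIV. \<Sum>j\<in>UNIV. max 0 (off_pattern \<sigma> X $i$j))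
    \<le> 2 * (\<Sum>i\<in>UNIV. \<Sum>j\<in>UNIV. max 0 (- X$i$j)) + (norm (off_pattern \<sigma> X))\<^sup>2"
proof -
  define E where "E = off_pattern \<sigma> X"
  have row: "2 * a * (\<Sum>j\<in>UNIV. max 0 (E$i$j)) - 2 * (\<Sum>j\<in>UNIV. max 0 (- X$i$j))
      - (\<Sum>j\<in>UNIV. (E$i$j)\<^sup>2) \<le> (\<Sum>j\<in>UNIV. X$i$j)\<^sup>2 - (\<Sum>j\<in>UNIV. (X$i$j)\<^sup>2)" for i
  proof -
    define x where "x = X$i$(\<sigma> i)"
    have "(\<Sum>j\<in>UNIV. X$i$j) = (\<Sum>j\<in>UNIV. (if j = \<sigma> i then x else 0) + E$i$j)"
      by (intro sum.cong) (auto simp: E_def off_pattern_def x_def)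
    then have sum_row: "(\<Sum>j\<in>UNIV. X$i$j) = x + (\<Sum>j\<in>UNIV. E$i$j)"
      by (simp add: sum.distrib)
    have "(\<Sum>j\<in>UNIV. (X$i$j)\<^sup>2) = (\<Sum>j\<in>UNIV. (if j = \<sigma> i then x\<^sup>2 else 0) + (E$i$j)\<^sup>2)"
      by (intro sum.cong) (auto simp: E_def off_pattern_def x_def)
    then have sum_sq_row: "(\<Sum>j\<in>UNIV. (X$i$j)\<^sup>2) = x\<^sup>2 + (\<Sum>j\<in>UNIV. (E$i$j)\<^sup>2)"
      by (simp add: sum.distrib)
    have "(\<Sum>j\<in>UNIV. max 0 (- E$i$j)) \<le> (\<Sum>j\<in>UNIV. max 0 (- X$i$j))"
      by (intro sum_mono) (simp add: E_def off_pattern_def)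
    moreover have "x \<le> 1" using Stiefel_abs_entry_le_1[OF X, of i "\<sigma> i"] by (simp add: x_def)
    then have "2 * a * (\<Sum>j\<in>UNIV. max 0 (E$i$j)) - 2 * (\<Sum>j\<in>UNIV. max 0 (- E$i$j))
        - (\<Sum>j\<in>UNIV. (E$i$j)\<^sup>2) \<le> (\<Sum>j\<in>UNIV. X$i$j)\<^sup>2 - (\<Sum>j\<in>UNIV. (X$i$j)\<^sup>2)"
      unfolding sum_row sum_sq_row
      by (rule row_cross_terms_lower_bound[OF diag[of i, folded x_def]])
    ultimately show ?thesis by linarith
  qed
  have "(\<Sum>i\<in>UNIV. 2 * a * (\<Sum>j\<in>UNIV. max 0 (E$i$j)) - 2 * (\<Sum>j\<in>UNIV. max 0 (- X$i$j))
      - (\<Sum>j\<in>UNIV. (E$i$j)\<^sup>2)) \<le> (\<Sum>i\<in>UNIV. (\<Sum>j\<in>UNIV. X$i$j)\<^sup>2 - (\<Sum>j\<in>UNIV. (X$i$j)\<^sup>2))"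
    by (rule sum_mono) (rule row)
  also have "\<dots> = 0"
    using Stiefel_sum_row_sums_squared[OF X] by (simp add: sum_subtractf)
  finally show ?thesis
    unfolding E_def[symmetric] power2_norm_matrix
    by (simp add: sum_subtractf sum_distrib_left)
qed

lemma off_pattern_norm_le_negpart:
  fixes X :: "real^'r^'n"
  assumes X: "X \<in> Stiefel" and a: "0 < a" and diag: "\<And>i. a \<le> X$i$(\<sigma> i)"
    and small: "norm (off_pattern \<sigma> X) \<le> a / 11"
  shows "norm (off_pattern \<sigma> X) \<le> 22/21 * (1 + sqrt (real CARD('n) * real CARD('r)) / a) * norm (negpart X)"
proof -
  define E where "E = off_pattern \<sigma> X"
  define e \<nu> s where "e = norm E" and "\<nu> = norm (negpart X)"
    and "s = sqrt (real CARD('n) * real CARD('r))"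
  define P :: "real^'r^'n" where "P = (\<chi> i j. max 0 (E$i$j))"
  define SP SN where "SP = (\<Sum>i\<in>UNIV. \<Sum>j\<in>UNIV. P$i$j)"
    and "SN = (\<Sum>i\<in>UNIV. \<Sum>j\<in>UNIV. max 0 (- X$i$j))"
  have cross: "2 * a * SP \<le> 2 * SN + e\<^sup>2"
    using Stiefel_off_pattern_cross_bound[OF X diag]
    by (simp add: SP_def SN_def P_def e_def E_def)
  \<comment> \<open>the negative part of X lives off the pattern, where X and E agree\<close>
  have "E = P - negpart X"
  proof -
    have "\<not> X$i$(\<sigma> i) \<le> 0" for i using a diag[of i] by simp
    then show ?thesis by (auto simp: vec_eq_iff E_def P_def off_pattern_def negpart_def max_def)
  qed
  then have "e \<le> norm P + \<nu>" unfolding e_def \<nu>_def by (simp add: norm_triangle_ineq4)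
  moreover have "norm P \<le> SP"
    using norm_matrix_le_sum_abs[of P] by (simp add: SP_def P_def)
  moreover have "SN \<le> s * \<nu>"
    using sum_abs_matrix_le_norm[of "negpart X"] by (simp add: SN_def s_def \<nu>_def negpart_def)
  moreover have "e * e \<le> a * e / 11"
    using small mult_right_mono[of e "a / 11" e] by (simp add: e_def E_def)
  ultimately have "a * e \<le> a * SP + a * \<nu>" "a * SP \<le> s * \<nu> + a * e / 22"
    using a cross mult_left_mono[of e "SP + \<nu>" a] by (simp_all add: distrib_left power2_eq_square)
  then have "a * e \<le> 22/21 * (s + a) * \<nu>" by (simp add: algebra_simps)
  then have "e \<le> 22/21 * (s + a) * \<nu> / a"
    using a by (simp add: pos_le_divide_eq mult_ac)
  also have "\<dots> = 22/21 * (1 + s / a) * \<nu>"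
    using a by (simp add: field_simps)
  finally show ?thesis by (simp add: e_def E_def s_def \<nu>_def)
qed

definition local_error_bound :: "real^'r^'n \<Rightarrow> real \<Rightarrow> bool" where
  "local_error_bound Xs c \<longleftrightarrow>
     (\<exists>d>0. \<forall>X\<in>Stiefel. dist X Xs \<le> d \<longrightarrow> infdist X Splus \<le> c * norm (negpart X))"

lemma local_error_bound_mono:
  "local_error_bound Xs c \<Longrightarrow> c \<le> c' \<Longrightarrow> local_error_bound Xs c'"
  unfolding local_error_bound_def by (meson mult_right_mono norm_ge_zero order_trans)

lemma infdist_Splus_near_no_zero_row:
  fixes Xs X :: "real^'r^'n"
  assumes Xs: "Xs \<in> Splus" and nz: "\<not> has_zero_row Xs"
    and X: "X \<in> Stiefel" and near: "dist X Xs \<le> min_nonzero_entry Xs / 12"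
  shows "infdist X Splus
    \<le> (6/5 + 9/5 * sqrt (real CARD('n) * real CARD('r)) / min_nonzero_entry Xs) * norm (negpart X)"
proof -
  define m s where "m = min_nonzero_entry Xs" and "s = sqrt (real CARD('n) * real CARD('r))"
  have m: "0 < m" "m \<le> 1" using min_nonzero_entry_Splus_bounds[OF Xs nz] by (simp_all add: m_def)
  obtain \<sigma> where \<sigma>: "\<And>i. Xs$i$(\<sigma> i) \<noteq> 0" "off_pattern \<sigma> Xs = 0"
    using Splus_row_pattern[OF Xs nz] by blast
  define e \<nu> w where "e = norm (off_pattern \<sigma> X)" and "\<nu> = norm (negpart X)" and "w = s / m * \<nu>"
  have "0 \<le> \<nu>" "0 \<le> w" using m by (simp_all add: \<nu>_def w_def s_def)
  have diag: "11 * m / 12 \<le> X$i$(\<sigma> i)" for i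
  proof -
    have "\<bar>X$i$(\<sigma> i) - Xs$i$(\<sigma> i)\<bar> \<le> dist X Xs"
      using abs_matrix_entry_le_norm[of "X - Xs" i "\<sigma> i"] by (simp add: dist_norm)
    moreover have "m \<le> Xs$i$(\<sigma> i)" using min_nonzero_entry_le[OF \<sigma>(1)] by (simp add: m_def)
    ultimately show ?thesis using near by (simp add: m_def)
  qed
  have "e \<le> dist X Xs"
    using norm_off_pattern_le[of \<sigma> "X - Xs"] by (simp add: e_def off_pattern_diff \<sigma>(2) dist_norm)
  then have e_small: "e \<le> m / 12" using near by (simp add: m_def)
  have "e \<le> 22/21 * (1 + s / (11 * m / 12)) * \<nu>"
    using off_pattern_norm_le_negpart[OF X _ diag] e_small m by (simp add: e_def s_def \<nu>_def)
  also have "\<dots> = 22/21 * \<nu> + 8/7 * w"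
    using m by (simp add: w_def field_simps)
  finally have e_le: "e \<le> 22/21 * \<nu> + 8/7 * w" .
  have "0 \<le> X$i$(\<sigma> i)" for i using diag[of i] m by linarith
  moreover have "e < 1" using e_small m by linarith
  ultimately have "infdist X Splus \<le> e + e\<^sup>2"
    using infdist_Splus_le_off_pattern[OF X] by (simp add: e_def)
  also have "\<dots> \<le> 13/12 * e"
    using e_small m mult_right_mono[of e "1/12" e] by (simp add: e_def power2_eq_square)
  also have "\<dots> \<le> 6/5 * \<nu> + 9/5 * w"
    using e_le \<open>0 \<le> \<nu>\<close> \<open>0 \<le> w\<close> by linarith
  also have "\<dots> = (6/5 + 9/5 * s / m) * \<nu>"
    by (simp add: w_def algebra_simps)
  finally show ?thesis by (simp add: \<nu>_def m_def s_def)
qed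

lemma local_error_bound_no_zero_row:
  fixes Xs :: "real^'r^'n"
  assumes Xs: "Xs \<in> Splus" and nz: "\<not> has_zero_row Xs"
  shows "local_error_bound Xs (6/5 + 9/5 * sqrt (real CARD('n) * real CARD('r)) / min_nonzero_entry Xs)"
proof -
  have "0 < min_nonzero_entry Xs / 12" using min_nonzero_entry_Splus_bounds[OF Xs nz] by simp
  then show ?thesis
    unfolding local_error_bound_def using infdist_Splus_near_no_zero_row[OF Xs nz] by blast
qed

lemma infdist_Splus_single_column:
  fixes X :: "real^'r^'n"
  assumes r1: "CARD('r) = 1" and X: "X \<in> Stiefel"
  shows "infdist X Splus \<le> 2 * norm (negpart X)"
proof -
  define \<nu> where "\<nu> = norm (negpart X)"
  have one_col: "j = k" for j k :: 'r using r1 card_1_singletonE by (metis singletonD UNIV_I)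
  have norm_1: "norm Y = 1" if "Y \<in> (Stiefel :: (real^'r^'n) set)" for Y
    using power2_norm_Stiefel[OF that] r1 real_sqrt_unique[of "norm Y" 1] by simp
  have normX: "norm X = 1" using norm_1[OF X] .
  have "\<nu> \<le> 1" using norm_negpart_le[of X] normX by (simp add: \<nu>_def)
  show ?thesis
  proof (cases "\<nu> < 1")
    case True
    define Y :: "real^'r^'n" where "Y = (\<chi> i j. max 0 (X$i$j))"
    have sq_split: "(max 0 x)\<^sup>2 + (max 0 (- x))\<^sup>2 = x\<^sup>2" for x :: real
      by (cases "0 \<le> x") (auto simp: max_def)
    have col: "(\<Sum>i\<in>UNIV. (Y$i$j)\<^sup>2) = 1 - \<nu>\<^sup>2" for j
    proof -
      have "(\<Sum>k\<in>UNIV. g k) = g j" for g :: "'r \<Rightarrow> real"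
      proof -
        have "g = (\<lambda>_. g j)" by (rule ext) (metis one_col)
        then show ?thesis by (metis sum_constant r1 of_nat_1 mult_1)
      qed
      then have "\<nu>\<^sup>2 = (\<Sum>i\<in>UNIV. (max 0 (- X$i$j))\<^sup>2)"
        by (simp add: \<nu>_def power2_norm_negpart)
      then have "(\<Sum>i\<in>UNIV. (Y$i$j)\<^sup>2) + \<nu>\<^sup>2 = (\<Sum>i\<in>UNIV. (X$i$j)\<^sup>2)"
        by (simp add: Y_def sq_split flip: sum.distrib)
      then show ?thesis using Stiefel_column_norm[OF X] by simp
    qed
    have "infdist Y Splus \<le> (\<Sum>j\<in>(UNIV::'r set). \<nu>\<^sup>2)"
      using True by (intro infdist_Splus_le_sum_column_defects[OF _ _ col])
        (auto simp: Y_def Nonneg_def one_col \<nu>_def power_less_one_iff abs_square_less_1)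
    moreover have "X - Y = - negpart X" by (simp add: vec_eq_iff Y_def negpart_def max_def)
    then have "dist X Y = \<nu>" by (simp add: dist_norm \<nu>_def)
    ultimately have "infdist X Splus \<le> \<nu>\<^sup>2 + \<nu>"
      using infdist_triangle[of X Splus Y] r1 by simp
    also have "\<dots> \<le> 2 * \<nu>" using \<open>\<nu> \<le> 1\<close> mult_right_mono[of \<nu> 1 \<nu>] by (simp add: \<nu>_def power2_eq_square)
    finally show ?thesis by (simp add: \<nu>_def)
  next
    case False
    have "CARD('r) \<le> CARD('n)" using r1 by (simp add: Suc_leI)
    then obtain Z where Z: "Z \<in> (Splus :: (real^'r^'n) set)"
      using Splus_nonempty by blast
    have "norm Z = 1" using norm_1 Z by (simp add: Splus_def)
    have "infdist X Splus \<le> dist X Z" using Z by (rule infdist_le)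
    also have "\<dots> \<le> norm X + norm Z" by (simp add: dist_norm norm_triangle_ineq4)
    finally show ?thesis using normX \<open>norm Z = 1\<close> False \<open>\<nu> \<le> 1\<close> by (simp add: \<nu>_def)
  qed
qed

lemma error_bound_constant_le:
  fixes n r m :: real
  assumes "r + 1 \<le> n" "2 \<le> r" "0 < m" "m \<le> 1"
  shows "6/5 + 9/5 * sqrt (n * r) / m \<le> 21/10 * sqrt r * (1 + 3 * r * (n - r)) / m"
proof -
  have sqrt_r: "1 \<le> sqrt r" using assms by simp
  have "sqrt n \<le> n" using assms by (simp add: real_sqrt_le_iff' power2_eq_square)
  moreover have "n - 1 \<le> r * (n - r)"
    using mult_nonneg_nonneg[of "r - 1" "n - r - 1"] assms by (simp add: algebra_simps)
  ultimately have "9/5 * sqrt n \<le> 63/10 * (r * (n - r))" using assms by linarith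
  then have "9/5 * sqrt n * sqrt r \<le> 63/10 * (r * (n - r)) * sqrt r"
    using sqrt_r by (intro mult_right_mono) auto
  moreover have "6/5 * m \<le> 21/10 * sqrt r" using sqrt_r assms by linarith
  ultimately have "6/5 * m + 9/5 * sqrt (n * r) \<le> 21/10 * sqrt r * (1 + 3 * r * (n - r))"
    by (simp add: real_sqrt_mult algebra_simps)
  then have "(6/5 * m + 9/5 * sqrt (n * r)) / m \<le> 21/10 * sqrt r * (1 + 3 * r * (n - r)) / m"
    using assms by (intro divide_right_mono) auto
  moreover have "(6/5 * m + 9/5 * sqrt (n * r)) / m = 6/5 + 9/5 * sqrt (n * r) / m"
    using assms by (simp add: field_simps)
  ultimately show ?thesis by simp
qed

lemma local_error_bound_exists:
  fixes Xs :: "real^'r^'n"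
  assumes rn: "CARD('r) \<le> CARD('n)" and Xs: "Xs \<in> Splus"
    and nz: "CARD('n) > CARD('r) \<and> CARD('r) > 1 \<longrightarrow> \<not> has_zero_row Xs"
  shows "\<exists>c. local_error_bound Xs c"
proof (cases "CARD('r) = 1")
  case True
  then have "local_error_bound Xs 2"
    unfolding local_error_bound_def using infdist_Splus_single_column by (intro exI[of _ 1]) auto
  then show ?thesis ..
next
  case False
  have "0 < CARD('r)" by simp
  then have "1 < CARD('r)" using False by linarith
  then have "\<not> has_zero_row Xs"
    using nz rn Splus_square_no_zero_row[OF Xs] by (cases "CARD('n) = CARD('r)") auto
  then show ?thesis using local_error_bound_no_zero_row[OF Xs] by blast
qed

section \<open>The penalty inequality at minimizers\<close>

lemma local_penalty_inequality:
  fixes f :: "real^'r^'n \<Rightarrow> real"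
  assumes rn: "CARD('r) \<le> CARD('n)" and min: "local_min_P f Xs"
    and proj: "proj_cond f Xs \<delta>' L'" "0 < \<delta>'" "0 \<le> L'"
    and eb: "local_error_bound Xs c"
  shows "\<exists>\<delta>>0. \<forall>X\<in>Stiefel. dist X Xs \<le> \<delta> \<longrightarrow> f X - f Xs + c\<^sup>2 * L' * (norm (negpart X))\<^sup>2 \<ge> 0"
proof -
  obtain e where "0 < e" and Xs: "Xs \<in> Splus"
    and e: "\<And>Y. Y \<in> Splus \<Longrightarrow> dist Y Xs < e \<Longrightarrow> f Xs \<le> f Y"
    using min unfolding local_min_P_def by blast
  obtain d where "0 < d"
    and d: "\<And>X. X \<in> Stiefel \<Longrightarrow> dist X Xs \<le> d \<Longrightarrow> infdist X Splus \<le> c * norm (negpart X)"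
    using eb unfolding local_error_bound_def by blast
  define \<delta> where "\<delta> = min d (min \<delta>' (e / 3))"
  have "f X - f Xs + c\<^sup>2 * L' * (norm (negpart X))\<^sup>2 \<ge> 0"
    if X: "X \<in> Stiefel" and near: "dist X Xs \<le> \<delta>" for X
  proof -
    obtain Xb where Xb: "Xb \<in> Proj Splus X"
      using Proj_nonempty[OF compact_imp_closed[OF compact_Splus] Splus_nonempty[OF rn]] by blast
    have "Xb \<in> Splus" and Xb_min: "dist X Xb \<le> dist X Xs"
      using Xb Xs by (auto simp: Proj_def)
    have "dist X Xb \<le> c * norm (negpart X)"
      using d[OF X] near dist_Proj_eq_infdist[OF Xb] by (simp add: \<delta>_def)
    then have "(dist X Xb)\<^sup>2 \<le> c\<^sup>2 * (norm (negpart X))\<^sup>2"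
      by (metis power_mono zero_le_dist power_mult_distrib)
    then have "f X - f Xb \<ge> - (c\<^sup>2 * L' * (norm (negpart X))\<^sup>2)"
      using proj X near Xb mult_left_mono[of _ _ L']
      unfolding proj_cond_def \<delta>_def by (fastforce simp: algebra_simps)
    moreover have "dist Xb Xs < e"
      using dist_triangle[of Xb Xs X] Xb_min near \<open>0 < e\<close> by (simp add: dist_commute \<delta>_def)
    then have "f Xs \<le> f Xb" using e \<open>Xb \<in> Splus\<close> by blast
    ultimately show ?thesis by linarith
  qed
  moreover have "0 < \<delta>" using \<open>0 < d\<close> \<open>0 < \<delta>'\<close> \<open>0 < e\<close> by (simp add: \<delta>_def)
  ultimately show ?thesis by blast
qed

lemma conclusions_at_local_min:
  fixes f :: "real^'r^'n \<Rightarrow> real"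
  assumes rn: "CARD('r) \<le> CARD('n)" and min: "local_min_P f Xs"
    and nz: "CARD('n) > CARD('r) \<and> CARD('r) > 1 \<longrightarrow> \<not> has_zero_row Xs"
    and proj: "proj_cond f Xs \<delta>' L'" "0 < \<delta>'" "0 < L'"
  shows "conclusions f Xs L'"
proof -
  have Xs: "Xs \<in> Splus" using min by (simp add: local_min_P_def)
  note penalty = local_penalty_inequality[OF rn min proj(1,2) less_imp_le[OF proj(3)]]
  have "local_error_bound Xs \<kappa>'"
    if \<kappa>': "0 < \<kappa>'" "\<forall>Z\<in>(Stiefel :: (real^'r^'n) set). infdist Z Splus \<le> \<kappa>' * infdist Z Nonneg"
    for \<kappa>'
    unfolding local_error_bound_def
    using \<kappa>' infdist_Nonneg_le_norm_negpart mult_left_mono[of _ _ \<kappa>']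
    by (intro exI[of _ 1]) (fastforce intro: order_trans)
  moreover have "local_error_bound Xs
      (21/10 * sqrt (real CARD('r)) * (1 + 3 * real CARD('r) * (real CARD('n) - real CARD('r)))
        / min_nonzero_entry Xs)"
    if "CARD('n) > CARD('r) \<and> CARD('r) > 1"
  proof (rule local_error_bound_mono)
    have "\<not> has_zero_row Xs" using nz that by blast
    then show "local_error_bound Xs
        (6/5 + 9/5 * sqrt (real CARD('n) * real CARD('r)) / min_nonzero_entry Xs)"
      by (rule local_error_bound_no_zero_row[OF Xs])
    show "6/5 + 9/5 * sqrt (real CARD('n) * real CARD('r)) / min_nonzero_entry Xs
        \<le> 21/10 * sqrt (real CARD('r)) * (1 + 3 * real CARD('r) * (real CARD('n) - real CARD('r)))
          / min_nonzero_entry Xs"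
      using that min_nonzero_entry_Splus_bounds[OF Xs \<open>\<not> has_zero_row Xs\<close>]
      by (intro error_bound_constant_le) auto
  qed
  ultimately show ?thesis
    unfolding conclusions_def Let_def by (blast dest: penalty)
qed

section \<open>Exact penalty\<close>

lemma penalty_violations_accumulate_at_argmin:
  fixes f g :: "'a::metric_space \<Rightarrow> real" and x :: "nat \<Rightarrow> 'a"
  assumes S: "compact S" and f: "continuous_on S f" and g: "continuous_on S g"
    and g_nonneg: "\<forall>x\<in>S. 0 \<le> g x"
    and xm: "xm \<in> argmin_on {x\<in>S. g x = 0} f"
    and x: "\<And>k. x k \<in> S" "\<And>k. f (x k) + real k * g (x k) < f xm"
  obtains l r where "strict_mono r" "(x \<circ> r) \<longlonglongrightarrow> l" "l \<in> argmin_on {x\<in>S. g x = 0} f"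
proof -
  obtain l r where l: "l \<in> S" and r: "strict_mono r" and lim: "(x \<circ> r) \<longlonglongrightarrow> l"
    using compact_imp_seq_compact[OF S] x(1) unfolding seq_compact_def by metis
  have "S \<noteq> {}" using xm by (auto simp: argmin_on_def)
  then obtain y0 where "y0 \<in> S" and y0: "\<And>y. y \<in> S \<Longrightarrow> f y0 \<le> f y"
    using continuous_attains_inf[OF S _ f] by blast
  have "g l \<le> 0"
  proof (rule LIMSEQ_le)
    show "(\<lambda>k. g (x (r k))) \<longlonglongrightarrow> g l"
      using continuous_on_tendsto_compose[OF g lim l] x(1) by (simp add: o_def)
    show "(\<lambda>k. (f xm - f y0) / real (r k)) \<longlonglongrightarrow> 0"
      using LIMSEQ_subseq_LIMSEQ[OF lim_const_over_n[of "f xm - f y0"] r] by (simp add: o_def)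
    have "g (x (r k)) \<le> (f xm - f y0) / real (r k)" if "k \<ge> 1" for k
    proof -
      have "0 < r k" using seq_suble[OF r, of k] that by linarith
      moreover have "real (r k) * g (x (r k)) \<le> f xm - f y0"
        using x(2)[of "r k"] y0[OF x(1)[of "r k"]] by simp
      ultimately show ?thesis by (simp add: field_simps)
    qed
    then show "\<exists>N. \<forall>k\<ge>N. g (x (r k)) \<le> (f xm - f y0) / real (r k)" by blast
  qed
  then have "g l = 0" using g_nonneg l by force
  have "f (x k) \<le> f xm" for k
  proof -
    have "0 \<le> real k * g (x k)" using g_nonneg x(1)[of k] by simp
    then show ?thesis using x(2)[of k] by linarith
  qed
  then have "f l \<le> f xm"
    using continuous_on_tendsto_compose[OF f lim l] x(1)
    by (intro LIMSEQ_le_const2) (auto simp: o_def)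
  then have "l \<in> argmin_on {x\<in>S. g x = 0} f"
    using xm l \<open>g l = 0\<close> unfolding argmin_on_def by (auto intro: order_trans[OF \<open>f l \<le> f xm\<close>])
  then show ?thesis using that r lim by blast
qed

lemma penalty_lower_bound:
  fixes f g :: "'a::metric_space \<Rightarrow> real"
  assumes S: "compact S" and f: "continuous_on S f" and g: "continuous_on S g"
    and g_nonneg: "\<forall>x\<in>S. 0 \<le> g x"
    and xm: "xm \<in> argmin_on {x\<in>S. g x = 0} f"
    and local: "\<forall>xs\<in>argmin_on {x\<in>S. g x = 0} f.
                  \<exists>\<delta>>0. \<exists>C. \<forall>x\<in>S. dist x xs \<le> \<delta> \<longrightarrow> f x - f xs + C * g x \<ge> 0"
  shows "\<exists>\<rho>. \<forall>x\<in>S. f xm \<le> f x + \<rho> * g x"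
proof (rule ccontr)
  assume "\<not> ?thesis"
  then have "\<forall>k::nat. \<exists>y. y \<in> S \<and> f y + real k * g y < f xm" by (auto simp: not_le)
  then obtain x where x: "\<And>k. x k \<in> S" "\<And>k. f (x k) + real k * g (x k) < f xm"
    by (metis choice)
  then obtain l r where r: "strict_mono r" and lim: "(x \<circ> r) \<longlonglongrightarrow> l"
    and l: "l \<in> argmin_on {x\<in>S. g x = 0} f"
    using penalty_violations_accumulate_at_argmin[OF S f g g_nonneg xm] by metis
  then obtain \<delta> C where "0 < \<delta>" and C: "\<And>y. y \<in> S \<Longrightarrow> dist y l \<le> \<delta> \<Longrightarrow> f y - f l + C * g y \<ge> 0"
    using local by blast
  obtain N where N: "\<And>k. k \<ge> N \<Longrightarrow> dist (x (r k)) l < \<delta>"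
    using lim \<open>0 < \<delta>\<close> unfolding lim_sequentially by (auto simp: o_def)
  define k where "k = max N (nat \<lceil>C\<rceil>)"
  have "C \<le> real (r k)"
    using seq_suble[OF r, of k] unfolding k_def by linarith
  then have "C * g (x (r k)) \<le> real (r k) * g (x (r k))"
    using g_nonneg x(1) by (intro mult_right_mono) auto
  moreover have "f (x (r k)) - f l + C * g (x (r k)) \<ge> 0"
    using C[OF x(1)] N[of k] by (simp add: k_def)
  moreover have "f xm \<le> f l" using xm l by (auto simp: argmin_on_def)
  ultimately show False using x(2)[of "r k"] by linarith
qed

lemma argmin_penalty_eq:
  fixes f g :: "'a \<Rightarrow> real"
  assumes g_nonneg: "\<forall>x\<in>S. 0 \<le> g x" and xm: "xm \<in> argmin_on {x\<in>S. g x = 0} f"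
    and bound: "\<forall>x\<in>S. f xm \<le> f x + \<rho>0 * g x" and "\<rho>0 < \<rho>"
  shows "argmin_on S (\<lambda>x. f x + \<rho> * g x) = argmin_on {x\<in>S. g x = 0} f"
proof
  have xm_S: "xm \<in> S" "g xm = 0" and xm_min: "\<And>y. y \<in> S \<Longrightarrow> g y = 0 \<Longrightarrow> f xm \<le> f y"
    using xm by (auto simp: argmin_on_def)
  show "argmin_on {x\<in>S. g x = 0} f \<subseteq> argmin_on S (\<lambda>x. f x + \<rho> * g x)"
  proof
    fix x assume "x \<in> argmin_on {x\<in>S. g x = 0} f"
    then have x: "x \<in> S" "g x = 0" "f x \<le> f xm" using xm_S by (auto simp: argmin_on_def)
    have "f x + \<rho> * g x \<le> f y + \<rho> * g y" if "y \<in> S" for y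
    proof -
      have "\<rho>0 * g y \<le> \<rho> * g y"
        using g_nonneg that \<open>\<rho>0 < \<rho>\<close> by (intro mult_right_mono) auto
      then show ?thesis using x bound that by fastforce
    qed
    then show "x \<in> argmin_on S (\<lambda>x. f x + \<rho> * g x)" using x by (simp add: argmin_on_def)
  qed
  show "argmin_on S (\<lambda>x. f x + \<rho> * g x) \<subseteq> argmin_on {x\<in>S. g x = 0} f"
  proof
    fix x assume "x \<in> argmin_on S (\<lambda>x. f x + \<rho> * g x)"
    then have x: "x \<in> S" and x_min: "\<And>y. y \<in> S \<Longrightarrow> f x + \<rho> * g x \<le> f y + \<rho> * g y"
      by (auto simp: argmin_on_def)
    have "f x + \<rho> * g x \<le> f x + \<rho>0 * g x"
      using x_min[OF xm_S(1)] xm_S(2) bound x by fastforce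
    then have "(\<rho> - \<rho>0) * g x \<le> 0" by (simp add: algebra_simps)
    then have "g x \<le> 0" using \<open>\<rho>0 < \<rho>\<close> by (simp add: mult_le_0_iff)
    then have "g x = 0" using g_nonneg x by (simp add: order_antisym)
    moreover have "f x \<le> f y" if "y \<in> S" "g y = 0" for y
      using x_min[OF that(1)] that(2) \<open>g x = 0\<close> by simp
    ultimately show "x \<in> argmin_on {x\<in>S. g x = 0} f" using x by (simp add: argmin_on_def)
  qed
qed

lemma exact_penalty:
  fixes f g :: "'a::metric_space \<Rightarrow> real"
  assumes S: "compact S" and f: "continuous_on S f" and g: "continuous_on S g"
    and g_nonneg: "\<forall>x\<in>S. 0 \<le> g x" and feasible: "{x\<in>S. g x = 0} \<noteq> {}"
    and local: "\<forall>xs\<in>argmin_on {x\<in>S. g x = 0} f.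
                  \<exists>\<delta>>0. \<exists>C. \<forall>x\<in>S. dist x xs \<le> \<delta> \<longrightarrow> f x - f xs + C * g x \<ge> 0"
  shows "\<exists>\<rho>h>0. \<forall>\<rho>\<ge>\<rho>h. argmin_on S (\<lambda>x. f x + \<rho> * g x) = argmin_on {x\<in>S. g x = 0} f"
proof -
  have "closed {x\<in>S. g x = 0}"
    by (rule continuous_closed_preimage_constant[OF g compact_imp_closed[OF S]])
  moreover have "{x\<in>S. g x = 0} = S \<inter> {x\<in>S. g x = 0}" by blast
  ultimately have "compact {x\<in>S. g x = 0}" using compact_Int_closed[OF S] by metis
  then obtain xm where "xm \<in> {x\<in>S. g x = 0}" "\<And>y. y \<in> {x\<in>S. g x = 0} \<Longrightarrow> f xm \<le> f y"
    using continuous_attains_inf[OF _ feasible continuous_on_subset[OF f]] by blast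
  then have xm: "xm \<in> argmin_on {x\<in>S. g x = 0} f" by (simp add: argmin_on_def)
  obtain \<rho>0 where "\<forall>x\<in>S. f xm \<le> f x + \<rho>0 * g x"
    using penalty_lower_bound[OF S f g g_nonneg xm local] by blast
  then have "argmin_on S (\<lambda>x. f x + \<rho> * g x) = argmin_on {x\<in>S. g x = 0} f"
    if "\<rho> \<ge> max \<rho>0 0 + 1" for \<rho>
    using that by (intro argmin_penalty_eq[OF g_nonneg xm]) auto
  then show ?thesis by (intro exI[of _ "max \<rho>0 0 + 1"]) auto
qed

theorem corollary3p12:
  fixes f :: "real^'r^'n \<Rightarrow> real" and Om :: "(real^'r^'n) set"
  assumes "CARD('r) \<le> CARD('n)"
    and "open Om" and "Stiefel \<subseteq> Om"
    and "\<exists>f'. (\<forall>X \<in> Om. (f has_derivative blinfun_apply (f' X)) (at X)) \<and> continuous_on Om f'"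
  shows
    "((CARD('n) > CARD('r) \<and> CARD('r) > 1 \<longrightarrow>
          (\<forall>Xs. global_min_P f Xs \<longrightarrow> \<not> has_zero_row Xs))
       \<and> (\<forall>Xs. global_min_P f Xs \<longrightarrow> (\<exists>\<delta>'>0. \<exists>L'>0. proj_cond f Xs \<delta>' L'))
      \<longrightarrow>
        (\<forall>Xs. global_min_P f Xs \<longrightarrow>
           (\<forall>\<delta>' L'. \<delta>' > 0 \<longrightarrow> L' > 0 \<longrightarrow> proj_cond f Xs \<delta>' L' \<longrightarrow> conclusions f Xs L'))
        \<and> (\<exists>\<rho>h>0. \<forall>\<rho>\<ge>\<rho>h.
              argmin_on Stiefel (\<lambda>X. f X + \<rho> * (norm (negpart X))\<^sup>2) = argmin_on Splus f))
   \<and> ((CARD('n) > CARD('r) \<and> CARD('r) > 1 \<longrightarrow>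
          (\<forall>Xs. local_min_P f Xs \<longrightarrow> \<not> has_zero_row Xs))
       \<and> (\<forall>Xs. local_min_P f Xs \<longrightarrow> (\<exists>\<delta>'>0. \<exists>L'>0. proj_cond f Xs \<delta>' L'))
      \<longrightarrow>
        (\<forall>Xs. local_min_P f Xs \<longrightarrow>
           (\<forall>\<delta>' L'. \<delta>' > 0 \<longrightarrow> L' > 0 \<longrightarrow> proj_cond f Xs \<delta>' L' \<longrightarrow> conclusions f Xs L')))"
proof -
  \<comment> \<open>only continuity of f on the Stiefel manifold is used\<close>
  have rn: "CARD('r) \<le> CARD('n)" by (rule assms(1))
  obtain f' where "\<forall>X \<in> Om. (f has_derivative blinfun_apply (f' X)) (at X)" using assms(4) by blast
  then have cont: "continuous_on Stiefel f"
    using assms(3) has_derivative_continuous by (blast intro: continuous_at_imp_continuous_on)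
  have global_local: "local_min_P f Xs" if "global_min_P f Xs" for Xs
    using that unfolding global_min_P_def local_min_P_def by (auto intro: exI[of _ 1])
  have "\<exists>\<delta>>0. \<exists>C. \<forall>X\<in>Stiefel. dist X Xs \<le> \<delta> \<longrightarrow> f X - f Xs + C * (norm (negpart X))\<^sup>2 \<ge> 0"
    if glob: "global_min_P f Xs" and nz: "CARD('n) > CARD('r) \<and> CARD('r) > 1 \<longrightarrow> \<not> has_zero_row Xs"
      and proj: "proj_cond f Xs \<delta>' L'" "0 < \<delta>'" "0 < L'" for Xs \<delta>' L'
  proof -
    obtain c where "local_error_bound Xs c"
      using local_error_bound_exists[OF rn _ nz] glob by (auto simp: global_min_P_def)
    then show ?thesis
      using local_penalty_inequality[OF rn global_local[OF glob] proj(1,2)] proj(3) by force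
  qed
  then have exact_penalty_Splus: "\<exists>\<rho>h>0. \<forall>\<rho>\<ge>\<rho>h.
      argmin_on Stiefel (\<lambda>X. f X + \<rho> * (norm (negpart X))\<^sup>2) = argmin_on Splus f"
    if "CARD('n) > CARD('r) \<and> CARD('r) > 1 \<longrightarrow> (\<forall>Xs. global_min_P f Xs \<longrightarrow> \<not> has_zero_row Xs)"
      "\<forall>Xs. global_min_P f Xs \<longrightarrow> (\<exists>\<delta>'>0. \<exists>L'>0. proj_cond f Xs \<delta>' L')"
    unfolding Splus_eq_negpart_zero using that Splus_nonempty[OF rn]
    by (intro exact_penalty compact_Stiefel cont continuous_intros continuous_on_norm_negpart)
      (auto simp: Splus_eq_negpart_zero global_min_P_def argmin_on_def)
  show ?thesis
    using conclusions_at_local_min[OF rn] global_local exact_penalty_Splus by blast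
qed

end
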